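(* Let $M=(\mathbf{K}^{\mathbf{n}},\rho)$ be a sum-matroid of rank $k=\rho(\mathbf{K}^{\mathbf{n}})$, let $n=n_1+\cdots+n_\ell$, and let $d_i=d^S_i(M)$ for $i=1,\dots,\eta(\mathbf{K}^{\mathbf{n}})=n-k$ be its generalized weights. Then $d_1<d_2<\cdots<d_{n-k}$.
   Context: $\ell,n_1,\dots,n_\ell$ positive integers, $K_1,\dots,K_\ell$ finite fields. $\mathcal{P}(\mathbf{K}^{\mathbf{n}})=\mathcal{P}(K_1^{n_1})\times\cdots\times\mathcal{P}(K_\ell^{n_\ell})$, $\mathcal{P}(K_i^{n_i})$ the lattice of $K_i$-subspaces of $K_i^{n_i}$, with componentwise inclusion, sum and intersection; $\mathrm{Rk}(\mathcal{L})=\sum_i\dim_{K_i}\mathcal{L}_i$; $\mathbf{K}^{\mathbf{n}}=(K_1^{n_1},\dots,K_\ell^{n_\ell})$. A sum-matroid is $(\mathbf{K}^{\mathbf{n}},\rho)$ with $\rho:\mathcal{P}(\mathbf{K}^{\mathbf{n}})\to\mathbb{Z}_{\ge0}$ satisfying (R1) $0\le\rho(\mathcal{L})\le\mathrm{Rk}(\mathcal{L})$; (R2) $\mathcal{L}\subseteq\mathcal{L}'\Rightarrow\rho(\mathcal{L})\le\rho(\mathcal{L}')$; (R3) $\rho(\mathcal{L}+\mathcal{L}')+\rho(\mathcal{L}\cap\mathcal{L}')\le\rho(\mathcal{L})+\rho(\mathcal{L}')$. Nullity: $\eta(\mathcal{L})=\mathrm{Rk}(\mathcal{L})-\rho(\mathcal{L})$.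 Generalized weights: $d^S_i(M)=\min\{\mathrm{Rk}(\mathcal{L}):\eta(\mathcal{L})=i\}$ for $i=1,\dots,\eta(\mathbf{K}^{\mathbf{n}})$. *)

theory Defs
  imports "HOL-Algebra.Ring" "HOL-Algebra.Ring_Divisibility"
begin

text \<open>Sum-matroids over finite fields K_1,...,K_l (indexed 0..l-1).
  All fields live in a common element type 'a, given as HOL-Algebra rings K i.
  A vector of K_i^{n_i} is a function nat => 'a with entries in carrier (K i) at
  positions < n_i and zero elsewhere.\<close>

definition vecs :: "('a, 'b) ring_scheme \<Rightarrow> nat \<Rightarrow> (nat \<Rightarrow> 'a) set" where
  "vecs F m = {v. (\<forall>j<m. v j \<in> carrier F) \<and> (\<forall>j\<ge>m. v j = \<zero>\<^bsub>F\<^esub>)}"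

definition vadd :: "('a, 'b) ring_scheme \<Rightarrow> (nat \<Rightarrow> 'a) \<Rightarrow> (nat \<Rightarrow> 'a) \<Rightarrow> (nat \<Rightarrow> 'a)" where
  "vadd F v w = (\<lambda>j. v j \<oplus>\<^bsub>F\<^esub> w j)"

definition vsmult :: "('a, 'b) ring_scheme \<Rightarrow> 'a \<Rightarrow> (nat \<Rightarrow> 'a) \<Rightarrow> (nat \<Rightarrow> 'a)" where
  "vsmult F c v = (\<lambda>j. c \<otimes>\<^bsub>F\<^esub> v j)"

definition vzero :: "('a, 'b) ring_scheme \<Rightarrow> nat \<Rightarrow> 'a" where
  "vzero F = (\<lambda>j. \<zero>\<^bsub>F\<^esub>)"

definition is_subspace :: "('a, 'b) ring_scheme \<Rightarrow> nat \<Rightarrow> (nat \<Rightarrow> 'a) set \<Rightarrow> bool" where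
  "is_subspace F m W \<longleftrightarrow> W \<subseteq> vecs F m \<and> vzero F \<in> W
     \<and> (\<forall>v\<in>W. \<forall>w\<in>W. vadd F v w \<in> W)
     \<and> (\<forall>c\<in>carrier F. \<forall>v\<in>W. vsmult F c v \<in> W)"

definition vspan :: "('a, 'b) ring_scheme \<Rightarrow> nat \<Rightarrow> (nat \<Rightarrow> 'a) set \<Rightarrow> (nat \<Rightarrow> 'a) set" where
  "vspan F m S = \<Inter>{W. is_subspace F m W \<and> S \<subseteq> W}"

definition vdim :: "('a, 'b) ring_scheme \<Rightarrow> nat \<Rightarrow> (nat \<Rightarrow> 'a) set \<Rightarrow> nat" where
  "vdim F m W = (LEAST d. \<exists>S. finite S \<and> card S = d \<and> S \<subseteq> W \<and> vspan F m S = W)"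

definition lat :: "nat \<Rightarrow> (nat \<Rightarrow> ('a, 'b) ring_scheme) \<Rightarrow> (nat \<Rightarrow> nat)
    \<Rightarrow> (nat \<Rightarrow> (nat \<Rightarrow> 'a) set) set" where
  "lat l K n = {L. (\<forall>i<l. is_subspace (K i) (n i) (L i)) \<and> (\<forall>i\<ge>l. L i = {})}"

definition lat_top :: "nat \<Rightarrow> (nat \<Rightarrow> ('a, 'b) ring_scheme) \<Rightarrow> (nat \<Rightarrow> nat)
    \<Rightarrow> nat \<Rightarrow> (nat \<Rightarrow> 'a) set" where
  "lat_top l K n = (\<lambda>i. if i < l then vecs (K i) (n i) else {})"

definition lat_sum :: "nat \<Rightarrow> (nat \<Rightarrow> ('a, 'b) ring_scheme)
    \<Rightarrow> (nat \<Rightarrow> (nat \<Rightarrow> 'a) set) \<Rightarrow> (nat \<Rightarrow> (nat \<Rightarrow> 'a) set) \<Rightarrow> nat \<Rightarrow> (nat \<Rightarrow> 'a) set" where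
  "lat_sum l K L L' = (\<lambda>i. if i < l then {vadd (K i) v w | v w. v \<in> L i \<and> w \<in> L' i} else {})"

definition lat_inter :: "(nat \<Rightarrow> (nat \<Rightarrow> 'a) set) \<Rightarrow> (nat \<Rightarrow> (nat \<Rightarrow> 'a) set) \<Rightarrow> nat \<Rightarrow> (nat \<Rightarrow> 'a) set" where
  "lat_inter L L' = (\<lambda>i. L i \<inter> L' i)"

definition lat_le :: "(nat \<Rightarrow> (nat \<Rightarrow> 'a) set) \<Rightarrow> (nat \<Rightarrow> (nat \<Rightarrow> 'a) set) \<Rightarrow> bool" where
  "lat_le L L' \<longleftrightarrow> (\<forall>i. L i \<subseteq> L' i)"

definition Rk :: "nat \<Rightarrow> (nat \<Rightarrow> ('a, 'b) ring_scheme) \<Rightarrow> (nat \<Rightarrow> nat)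
    \<Rightarrow> (nat \<Rightarrow> (nat \<Rightarrow> 'a) set) \<Rightarrow> nat" where
  "Rk l K n L = (\<Sum>i<l. vdim (K i) (n i) (L i))"

definition sum_matroid :: "nat \<Rightarrow> (nat \<Rightarrow> ('a, 'b) ring_scheme) \<Rightarrow> (nat \<Rightarrow> nat)
    \<Rightarrow> ((nat \<Rightarrow> (nat \<Rightarrow> 'a) set) \<Rightarrow> nat) \<Rightarrow> bool" where
  "sum_matroid l K n \<rho> \<longleftrightarrow>
     (\<forall>L\<in>lat l K n. \<rho> L \<le> Rk l K n L)
   \<and> (\<forall>L\<in>lat l K n. \<forall>L'\<in>lat l K n. lat_le L L' \<longrightarrow> \<rho> L \<le> \<rho> L')
   \<and> (\<forall>L\<in>lat l K n. \<forall>L'\<in>lat l K n.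
        \<rho> (lat_sum l K L L') + \<rho> (lat_inter L L') \<le> \<rho> L + \<rho> L')"

definition nullity :: "nat \<Rightarrow> (nat \<Rightarrow> ('a, 'b) ring_scheme) \<Rightarrow> (nat \<Rightarrow> nat)
    \<Rightarrow> ((nat \<Rightarrow> (nat \<Rightarrow> 'a) set) \<Rightarrow> nat) \<Rightarrow> (nat \<Rightarrow> (nat \<Rightarrow> 'a) set) \<Rightarrow> nat" where
  "nullity l K n \<rho> L = Rk l K n L - \<rho> L"

definition gen_weight :: "nat \<Rightarrow> (nat \<Rightarrow> ('a, 'b) ring_scheme) \<Rightarrow> (nat \<Rightarrow> nat)
    \<Rightarrow> ((nat \<Rightarrow> (nat \<Rightarrow> 'a) set) \<Rightarrow> nat) \<Rightarrow> nat \<Rightarrow> nat" where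
  "gen_weight l K n \<rho> i =
     (LEAST r. \<exists>L\<in>lat l K n. nullity l K n \<rho> L = i \<and> Rk l K n L = r)"

end

theory Submission
  imports Defs
begin

text \<open>Deleting one vector from a minimal spanning set of a component lowers the rank
  \<open>Rk\<close> by exactly one, and since \<open>\<rho>\<close> is monotone this lowers the nullity by at most
  one. Starting from an element of nullity \<open>i + 1\<close> and rank \<open>d\<^sub>i\<^sub>+\<^sub>1\<close> and descending
  step by step, one therefore meets nullity \<open>i\<close> at a rank strictly below \<open>d\<^sub>i\<^sub>+\<^sub>1\<close>,
  so \<open>d\<^sub>i < d\<^sub>i\<^sub>+\<^sub>1\<close>.\<close>

lemma is_subspace_vecs:
  assumes "ring F" shows "is_subspace F m (vecs F m)"
proof -
  interpret ring F by fact
  show ?thesis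
    unfolding is_subspace_def vecs_def vzero_def vadd_def vsmult_def by auto
qed

lemma finite_vecs:
  assumes "finite (carrier F)" shows "finite (vecs F m)"
proof (rule inj_on_finite)
  show "inj_on (\<lambda>v. map v [0..<m]) (vecs F m)"
  proof (rule inj_onI)
    fix v w assume v: "v \<in> vecs F m" and w: "w \<in> vecs F m" and eq: "map v [0..<m] = map w [0..<m]"
    show "v = w"
    proof
      fix j show "v j = w j"
        using v w arg_cong[OF eq, of "\<lambda>xs. xs ! j"] by (cases "j < m") (auto simp: vecs_def)
    qed
  qed
  show "(\<lambda>v. map v [0..<m]) ` vecs F m \<subseteq> {xs. set xs \<subseteq> carrier F \<and> length xs = m}"
    by (auto simp: vecs_def)
  show "finite {xs. set xs \<subseteq> carrier F \<and> length xs = m}"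
    using assms by (rule finite_lists_length_eq)
qed

lemma vspan_least: "is_subspace F m W \<Longrightarrow> S \<subseteq> W \<Longrightarrow> vspan F m S \<subseteq> W"
  unfolding vspan_def by auto

lemma vspan_superset: "S \<subseteq> vspan F m S"
  unfolding vspan_def by auto

lemma vspan_mono: "S \<subseteq> T \<Longrightarrow> vspan F m S \<subseteq> vspan F m T"
  unfolding vspan_def by auto

lemma is_subspace_Inter:
  assumes "\<A> \<noteq> {}" "\<And>W. W \<in> \<A> \<Longrightarrow> is_subspace F m W"
  shows "is_subspace F m (\<Inter>\<A>)"
  using assms unfolding is_subspace_def by blast

lemma is_subspace_vspan:
  assumes "ring F" "S \<subseteq> vecs F m" shows "is_subspace F m (vspan F m S)"
proof -
  have "vecs F m \<in> {W. is_subspace F m W \<and> S \<subseteq> W}"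
    using is_subspace_vecs[OF assms(1)] assms(2) by simp
  then show ?thesis
    unfolding vspan_def by (intro is_subspace_Inter) auto
qed

lemma vspan_subspace_eq: "is_subspace F m W \<Longrightarrow> vspan F m W = W"
  by (simp add: subset_antisym vspan_least vspan_superset)

lemma vdim_le_card:
  assumes "finite S" "S \<subseteq> W" "vspan F m S = W"
  shows "vdim F m W \<le> card S"
  unfolding vdim_def by (rule Least_le) (use assms in blast)

lemma vdim_attained:
  assumes "finite S" "S \<subseteq> W" "vspan F m S = W"
  obtains T where "finite T" "card T = vdim F m W" "T \<subseteq> W" "vspan F m T = W"
proof -
  have "\<exists>T. finite T \<and> card T = vdim F m W \<and> T \<subseteq> W \<and> vspan F m T = W"
    unfolding vdim_def by (rule LeastI_ex) (use assms in blast)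
  then show ?thesis using that by blast
qed

lemma vdim_vspan_insert_le:
  assumes "ring F" and W: "is_subspace F m W" "finite W" and s: "s \<in> vecs F m"
  shows "vdim F m (vspan F m (insert s W)) \<le> Suc (vdim F m W)"
proof -
  obtain T where T: "finite T" "card T = vdim F m W" "T \<subseteq> W" "vspan F m T = W"
    using vdim_attained[OF W(2) order_refl vspan_subspace_eq[OF W(1)]] .
  let ?V = "vspan F m (insert s T)"
  have "insert s T \<subseteq> vecs F m"
    using T(3) W(1) s unfolding is_subspace_def by blast
  then have V: "is_subspace F m ?V"
    by (rule is_subspace_vspan[OF \<open>ring F\<close>])
  have "W \<subseteq> ?V"
    using T(4) vspan_mono[of T "insert s T" F m] by blast
  moreover have "s \<in> ?V"
    using vspan_superset[of "insert s T" F m] by blast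
  ultimately have "vspan F m (insert s W) \<subseteq> ?V"
    by (intro vspan_least[OF V]) blast
  moreover have "?V \<subseteq> vspan F m (insert s W)"
    using T(3) by (intro vspan_mono) blast
  ultimately have "?V = vspan F m (insert s W)"
    by (rule subset_antisym[rotated])
  then have "vdim F m (vspan F m (insert s W)) \<le> card (insert s T)"
    using T(1) vspan_superset[of "insert s T" F m] by (intro vdim_le_card) auto
  also have "\<dots> \<le> Suc (card T)"
    using T(1) by (simp add: card_insert_if)
  finally show ?thesis
    using T(2) by simp
qed

lemma ex_subspace_vdim_Suc:
  assumes "ring F" and W: "is_subspace F m W" "finite W" and pos: "vdim F m W > 0"
  obtains W1 where "is_subspace F m W1" "W1 \<subseteq> W" "Suc (vdim F m W1) = vdim F m W"
proof -
  obtain S where S: "finite S" "card S = vdim F m W" "S \<subseteq> W" "vspan F m S = W"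
    using vdim_attained[OF W(2) order_refl vspan_subspace_eq[OF W(1)]] .
  then obtain s where s: "s \<in> S" using pos by fastforce
  define W1 where "W1 = vspan F m (S - {s})"
  have W_vecs: "W \<subseteq> vecs F m" using W(1) by (simp add: is_subspace_def)
  have W1: "is_subspace F m W1"
    unfolding W1_def using S(3) W_vecs by (intro is_subspace_vspan[OF \<open>ring F\<close>]) auto
  have "W1 \<subseteq> W"
    unfolding W1_def using S(3) by (intro vspan_least[OF W(1)]) auto
  have "vdim F m W1 \<le> card (S - {s})"
    using S(1) by (intro vdim_le_card) (auto simp: W1_def vspan_superset)
  then have upper: "Suc (vdim F m W1) \<le> vdim F m W"
    using S(1,2) s pos by simp
  have "S \<subseteq> insert s W1"
    using vspan_superset[of "S - {s}" F m] by (auto simp: W1_def)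
  then have "W \<subseteq> vspan F m (insert s W1)"
    using S(4) vspan_mono by blast
  moreover have "vspan F m (insert s W1) \<subseteq> W"
    using \<open>W1 \<subseteq> W\<close> S(3) s by (intro vspan_least[OF W(1)]) auto
  ultimately have "W = vspan F m (insert s W1)" by blast
  moreover have "vdim F m (vspan F m (insert s W1)) \<le> Suc (vdim F m W1)"
    using W_vecs S(3) s \<open>W1 \<subseteq> W\<close> W(2)
    by (intro vdim_vspan_insert_le[OF \<open>ring F\<close> W1]) (auto intro: finite_subset)
  ultimately show ?thesis
    using that W1 \<open>W1 \<subseteq> W\<close> upper by simp
qed

lemma Rk_fun_upd:
  assumes "i < l"
  shows "Rk l K n (L(i := W)) + vdim (K i) (n i) (L i) = Rk l K n L + vdim (K i) (n i) W"
proof -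
  have i: "i \<in> {..<l}" using assms by simp
  have rest: "(\<Sum>j\<in>{..<l} - {i}. vdim (K j) (n j) ((L(i := W)) j))
      = (\<Sum>j\<in>{..<l} - {i}. vdim (K j) (n j) (L j))"
    by (rule sum.cong) auto
  show ?thesis
    unfolding Rk_def sum.remove[OF finite_lessThan i] rest by simp
qed

lemma ex_lat_le_Rk_Suc:
  assumes ring: "\<And>i. i < l \<Longrightarrow> ring (K i)"
    and fin: "\<And>i. i < l \<Longrightarrow> finite (carrier (K i))"
    and L: "L \<in> lat l K n" and pos: "Rk l K n L > 0"
  obtains L1 where "L1 \<in> lat l K n" "lat_le L1 L" "Suc (Rk l K n L1) = Rk l K n L"
proof -
  have "\<exists>i<l. vdim (K i) (n i) (L i) > 0"
    using pos unfolding Rk_def by (rule contrapos_pp) simp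
  then obtain i where i: "i < l" "vdim (K i) (n i) (L i) > 0" by blast
  have sub: "is_subspace (K i) (n i) (L i)" using L i(1) by (simp add: lat_def)
  moreover have "finite (L i)"
    using finite_vecs[OF fin[OF i(1)]] sub unfolding is_subspace_def by (blast intro: finite_subset)
  ultimately obtain W1 where W1: "is_subspace (K i) (n i) W1" "W1 \<subseteq> L i"
      "Suc (vdim (K i) (n i) W1) = vdim (K i) (n i) (L i)"
    using ex_subspace_vdim_Suc[OF ring[OF i(1)] _ _ i(2)] by blast
  show ?thesis
  proof (rule that)
    show "L(i := W1) \<in> lat l K n" using L W1(1) i(1) by (auto simp: lat_def)
    show "lat_le (L(i := W1)) L" using W1(2) by (simp add: lat_le_def)
    show "Suc (Rk l K n (L(i := W1))) = Rk l K n L"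
      using Rk_fun_upd[OF i(1), of K n L W1] W1(3) by simp
  qed
qed

lemma nullity_le_Suc_nullity:
  assumes "sum_matroid l K n \<rho>" "L1 \<in> lat l K n" "L \<in> lat l K n" "lat_le L1 L"
    and "Suc (Rk l K n L1) = Rk l K n L"
  shows "nullity l K n \<rho> L \<le> Suc (nullity l K n \<rho> L1)"
proof -
  have "\<rho> L1 \<le> \<rho> L" using assms(1-4) unfolding sum_matroid_def by blast
  then show ?thesis using assms(5) unfolding nullity_def by linarith
qed

lemma ex_nullity_eq_Rk_less:
  assumes ring: "\<And>i. i < l \<Longrightarrow> ring (K i)"
    and fin: "\<And>i. i < l \<Longrightarrow> finite (carrier (K i))"
    and M: "sum_matroid l K n \<rho>"
  shows "L \<in> lat l K n \<Longrightarrow> j < nullity l K n \<rho> L \<Longrightarrow>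
     \<exists>L'\<in>lat l K n. nullity l K n \<rho> L' = j \<and> Rk l K n L' < Rk l K n L"
proof (induction "Rk l K n L" arbitrary: L rule: less_induct)
  case less
  have "Rk l K n L > 0" using less.prems(2) unfolding nullity_def by simp
  then obtain L1 where L1: "L1 \<in> lat l K n" "lat_le L1 L" "Suc (Rk l K n L1) = Rk l K n L"
    using ex_lat_le_Rk_Suc[OF ring fin less.prems(1)] by blast
  have "j \<le> nullity l K n \<rho> L1"
    using nullity_le_Suc_nullity[OF M L1(1) less.prems(1) L1(2,3)] less.prems(2) by simp
  then consider "j = nullity l K n \<rho> L1" | "j < nullity l K n \<rho> L1" by linarith
  then show ?case
  proof cases
    case 1
    then show ?thesis using L1 by (intro bexI[of _ L1]) auto
  next
    case 2
    then show ?thesis using less.hyps[OF _ L1(1)] L1(3) by fastforce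
  qed
qed

lemma ex_nullity_eq:
  assumes "\<And>i. i < l \<Longrightarrow> ring (K i)" "\<And>i. i < l \<Longrightarrow> finite (carrier (K i))"
    and "sum_matroid l K n \<rho>" and "L \<in> lat l K n" "j \<le> nullity l K n \<rho> L"
  shows "\<exists>L'\<in>lat l K n. nullity l K n \<rho> L' = j"
proof (cases "j = nullity l K n \<rho> L")
  case False
  then show ?thesis
    using ex_nullity_eq_Rk_less[OF assms(1-4)] assms(5) by (meson le_neq_implies_less)
qed (use assms(4) in blast)

lemma gen_weight_le:
  "L \<in> lat l K n \<Longrightarrow> nullity l K n \<rho> L = i \<Longrightarrow> gen_weight l K n \<rho> i \<le> Rk l K n L"
  unfolding gen_weight_def by (rule Least_le) blast

lemma gen_weight_attained:
  assumes "\<exists>L\<in>lat l K n. nullity l K n \<rho> L = i"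
  obtains L where "L \<in> lat l K n" "nullity l K n \<rho> L = i" "Rk l K n L = gen_weight l K n \<rho> i"
proof -
  have "\<exists>L\<in>lat l K n. nullity l K n \<rho> L = i \<and> Rk l K n L = gen_weight l K n \<rho> i"
    unfolding gen_weight_def by (rule LeastI_ex) (use assms in blast)
  then show ?thesis using that by blast
qed

lemma gen_weight_less_Suc:
  assumes ring: "\<And>i. i < l \<Longrightarrow> ring (K i)"
    and fin: "\<And>i. i < l \<Longrightarrow> finite (carrier (K i))"
    and M: "sum_matroid l K n \<rho>"
    and ex: "\<exists>L\<in>lat l K n. nullity l K n \<rho> L = Suc i"
  shows "gen_weight l K n \<rho> i < gen_weight l K n \<rho> (Suc i)"
proof -
  obtain L where L: "L \<in> lat l K n" "nullity l K n \<rho> L = Suc i"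
      "Rk l K n L = gen_weight l K n \<rho> (Suc i)"
    using gen_weight_attained[OF ex] .
  then obtain L' where L': "L' \<in> lat l K n" "nullity l K n \<rho> L' = i" "Rk l K n L' < Rk l K n L"
    using ex_nullity_eq_Rk_less[OF ring fin M L(1), of i] by auto
  have "gen_weight l K n \<rho> i \<le> Rk l K n L'"
    using gen_weight_le[OF L'(1,2)] .
  then show ?thesis using L'(3) L(3) by simp
qed

lemma lat_top_in_lat:
  "(\<And>i. i < l \<Longrightarrow> ring (K i)) \<Longrightarrow> lat_top l K n \<in> lat l K n"
  unfolding lat_def lat_top_def by (auto intro: is_subspace_vecs)

theorem mainTheorem9:
  fixes l :: nat and K :: "nat \<Rightarrow> ('a, 'b) ring_scheme" and n :: "nat \<Rightarrow> nat"
    and \<rho> :: "(nat \<Rightarrow> (nat \<Rightarrow> 'a) set) \<Rightarrow> nat"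
  assumes "l \<ge> 1"
    and "\<And>i. i < l \<Longrightarrow> n i \<ge> 1"
    and "\<And>i. i < l \<Longrightarrow> field (K i)"
    and "\<And>i. i < l \<Longrightarrow> finite (carrier (K i))"
    and "sum_matroid l K n \<rho>"
  shows "\<forall>i. 1 \<le> i \<and> i < nullity l K n \<rho> (lat_top l K n) \<longrightarrow>
           gen_weight l K n \<rho> i < gen_weight l K n \<rho> (i + 1)"
proof (intro allI impI)
  fix i assume i: "1 \<le> i \<and> i < nullity l K n \<rho> (lat_top l K n)"
  have ring: "\<And>i. i < l \<Longrightarrow> ring (K i)" using assms(3) field.is_ring by blast
  have "\<exists>L\<in>lat l K n. nullity l K n \<rho> L = Suc i"
    using i by (intro ex_nullity_eq[OF ring assms(4,5) lat_top_in_lat[OF ring]]) auto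
  then show "gen_weight l K n \<rho> i < gen_weight l K n \<rho> (i + 1)"
    using gen_weight_less_Suc[OF ring assms(4,5)] by simp
qed

end
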